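(* Let $G$ be a connected graph, let $\sigma$ be a BFS ordering of $G$ with $\mathcal{F}$-tree $T_\sigma$, and let $S$ be the set of the first $k$ internal vertices of $T_\sigma$ (with respect to the order $\sigma$). Let $\rho'$ be the ordering of $S$ induced by $\sigma$, let $\rho$ be any ordering of $V(G)$ that starts with $\rho'$, let $\tau$ be the $\mathrm{BFS}^+_\rho$ ordering of $G$, and let $T_\tau$ be the $\mathcal{F}$-tree of $\tau$. Then every $v\in S$ has the same set of children in $T_\sigma$ as in $T_\tau$.
   Context: All graphs are finite, simple, undirected, connected and non-empty. A BFS ordering is produced by breadth-first search with a queue: choose a start vertex, mark it visited and enqueue it; repeatedly dequeue the front vertex $v$ and enqueue all unvisited neighbors of $v$ in some order, marking them visited; the ordering is the visiting order. Given a linear ordering $\rho$ of $V(G)$, the $\mathrm{BFS}^+_\rho$ ordering is the BFS ordering in which every tie is broken by $\rho$: the start vertex is the first vertex of $\rho$, and whenever the unvisited neighbors of a dequeued vertex are enqueued, they are enqueued in the order in which they appear in $\rho$. The $\mathcal{F}$-tree of an ordering $(v_1,\dots,v_n)$ is the spanning tree rooted at $v_1$ in which the parent of $v_i$ ($i>1$) is its leftmost neighbor in the ordering. A leaf is a non-root vertex without children; all other vertices, including the root, are internal. *)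

theory Defs
  imports Main "HOL-Library.Sublist"
begin

definition simple_graph :: "'a set \<Rightarrow> ('a \<Rightarrow> 'a \<Rightarrow> bool) \<Rightarrow> bool" where
  "simple_graph V E \<longleftrightarrow> finite V \<and> V \<noteq> {} \<and>
     (\<forall>u v. E u v \<longrightarrow> u \<in> V \<and> v \<in> V) \<and>
     (\<forall>u v. E u v \<longrightarrow> E v u) \<and> (\<forall>u. \<not> E u u)"

definition connected_graph :: "'a set \<Rightarrow> ('a \<Rightarrow> 'a \<Rightarrow> bool) \<Rightarrow> bool" where
  "connected_graph V E \<longleftrightarrow> simple_graph V E \<and> (\<forall>u\<in>V. \<forall>v\<in>V. E\<^sup>*\<^sup>* u v)"

definition linear_ordering :: "'a set \<Rightarrow> 'a list \<Rightarrow> bool" where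
  "linear_ordering V xs \<longleftrightarrow> distinct xs \<and> set xs = V"

inductive bfs_reach :: "('a \<Rightarrow> 'a \<Rightarrow> bool) \<Rightarrow> 'a \<Rightarrow> 'a list \<Rightarrow> 'a list \<Rightarrow> bool"
  for E :: "'a \<Rightarrow> 'a \<Rightarrow> bool" and s :: 'a where
  start: "bfs_reach E s [s] [s]"
| step: "bfs_reach E s vis (v # q) \<Longrightarrow> distinct ns \<Longrightarrow>
         set ns = {u. E v u \<and> u \<notin> set vis} \<Longrightarrow> bfs_reach E s (vis @ ns) (q @ ns)"

definition bfs_ordering :: "'a set \<Rightarrow> ('a \<Rightarrow> 'a \<Rightarrow> bool) \<Rightarrow> 'a list \<Rightarrow> bool" where
  "bfs_ordering V E \<sigma> \<longleftrightarrow> (\<exists>s\<in>V. bfs_reach E s \<sigma> [])"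

inductive bfsp_reach :: "('a \<Rightarrow> 'a \<Rightarrow> bool) \<Rightarrow> 'a list \<Rightarrow> 'a list \<Rightarrow> 'a list \<Rightarrow> bool"
  for E :: "'a \<Rightarrow> 'a \<Rightarrow> bool" and \<rho> :: "'a list" where
  start: "bfsp_reach E \<rho> [hd \<rho>] [hd \<rho>]"
| step: "bfsp_reach E \<rho> vis (v # q) \<Longrightarrow>
         bfsp_reach E \<rho> (vis @ filter (\<lambda>u. E v u \<and> u \<notin> set vis) \<rho>)
                         (q @ filter (\<lambda>u. E v u \<and> u \<notin> set vis) \<rho>)"

definition bfs_plus_ordering :: "('a \<Rightarrow> 'a \<Rightarrow> bool) \<Rightarrow> 'a list \<Rightarrow> 'a list \<Rightarrow> bool" where
  "bfs_plus_ordering E \<rho> \<tau> \<longleftrightarrow> bfsp_reach E \<rho> \<tau> []"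

definition ftree_parent :: "('a \<Rightarrow> 'a \<Rightarrow> bool) \<Rightarrow> 'a list \<Rightarrow> 'a \<Rightarrow> 'a" where
  "ftree_parent E \<sigma> v = hd (filter (E v) \<sigma>)"

definition ftree_children :: "('a \<Rightarrow> 'a \<Rightarrow> bool) \<Rightarrow> 'a list \<Rightarrow> 'a \<Rightarrow> 'a set" where
  "ftree_children E \<sigma> u = {v \<in> set \<sigma>. v \<noteq> hd \<sigma> \<and> ftree_parent E \<sigma> v = u}"

definition ftree_internal :: "('a \<Rightarrow> 'a \<Rightarrow> bool) \<Rightarrow> 'a list \<Rightarrow> 'a \<Rightarrow> bool" where
  "ftree_internal E \<sigma> u \<longleftrightarrow> u \<in> set \<sigma> \<and> (u = hd \<sigma> \<or> ftree_children E \<sigma> u \<noteq> {})"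

definition first_internal :: "('a \<Rightarrow> 'a \<Rightarrow> bool) \<Rightarrow> 'a list \<Rightarrow> nat \<Rightarrow> 'a list" where
  "first_internal E \<sigma> k = take k (filter (ftree_internal E \<sigma>) \<sigma>)"

end

theory Submission
  imports Defs
begin

(* The key invariant is: for each of the first k internal vertices u, every vertex visited
   before u by tau is visited before u by sigma.  It is proved along sigma.  The sigma-parent p
   of u is an earlier internal vertex, so p satisfies the invariant, and since parents are
   leftmost neighbours this forces p to be the tau-parent of u as well.  A vertex y preceding u
   in tau is then either a tau-sibling of u, hence precedes u in rho and so lies in the prefix
   of rho formed by internal vertices in sigma order; or its tau-parent precedes p, and
   monotonicity of F-tree parents in BFS orderings moves y before u in sigma.  Finally, once the
   invariant holds for u and all earlier internal vertices, the leftmost-neighbour rule shows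
   that a vertex has parent u in one F-tree iff it has parent u in the other. *)

fun index :: "'a list \<Rightarrow> 'a \<Rightarrow> nat" where
  "index [] x = 0"
| "index (a # L) x = (if a = x then 0 else Suc (index L x))"

lemma index_less_length: "x \<in> set L \<Longrightarrow> index L x < length L"
  by (induction L) auto

lemma index_less_length_iff: "index L x < length L \<longleftrightarrow> x \<in> set L"
  by (induction L) auto

lemma index_eq_iff: "x \<in> set L \<Longrightarrow> y \<in> set L \<Longrightarrow> index L x = index L y \<longleftrightarrow> x = y"
  by (induction L) auto

lemma index_hd: "L \<noteq> [] \<Longrightarrow> index L (hd L) = 0"
  by (cases L) auto

lemma index_append_left: "x \<in> set A \<Longrightarrow> index (A @ B) x = index A x"
  by (induction A) auto

lemma index_append_right: "x \<notin> set A \<Longrightarrow> index (A @ B) x = length A + index B x"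
  by (induction A) auto

lemma index_append_less:
  "x \<in> set A \<Longrightarrow> y \<notin> set A \<Longrightarrow> index (A @ B) x < index (A @ B) y"
  using index_append_left index_append_right index_less_length by (metis trans_less_add1)

lemma index_filter_less:
  "x \<in> set (filter P L) \<Longrightarrow> y \<in> set (filter P L) \<Longrightarrow>
   index (filter P L) x < index (filter P L) y \<Longrightarrow> index L x < index L y"
  by (induction L) (auto split: if_splits)

lemma index_take: "x \<in> set (take k L) \<Longrightarrow> index (take k L) x = index L x"
  by (induction L arbitrary: k) (auto simp: take_Cons split: nat.splits)

lemma take_filter_downward_closed:
  "u \<in> set (take k (filter P L)) \<Longrightarrow> y \<in> set L \<Longrightarrow> P y \<Longrightarrow> index L y \<le> index L u
   \<Longrightarrow> y \<in> set (take k (filter P L))"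
proof (induction L arbitrary: k)
  case (Cons a L)
  then obtain k' where k: "k = Suc k'"
    by (cases k) auto
  show ?case
  proof (cases "y = a")
    case False
    with Cons.prems have "u \<noteq> a" "y \<in> set L" "index L y \<le> index L u"
      by (auto split: if_splits)
    with Cons k show ?thesis
      by (cases "P a") (auto intro: Cons.IH)
  qed (use Cons.prems k in simp)
qed simp

lemma ftree_parent_in_set:
  "z \<in> set L \<Longrightarrow> E w z \<Longrightarrow> ftree_parent E L w \<in> set L \<and> E w (ftree_parent E L w)"
  unfolding ftree_parent_def by (induction L) auto

lemma ftree_parent_leftmost:
  "z \<in> set L \<Longrightarrow> E w z \<Longrightarrow> index L (ftree_parent E L w) \<le> index L z"
  unfolding ftree_parent_def by (induction L) auto

lemma ftree_parent_append:
  "z \<in> set A \<Longrightarrow> E w z \<Longrightarrow> ftree_parent E (A @ B) w = ftree_parent E A w"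
  unfolding ftree_parent_def by (induction A) auto

definition connected_ordering :: "('a \<Rightarrow> 'a \<Rightarrow> bool) \<Rightarrow> 'a list \<Rightarrow> bool" where
  "connected_ordering E L \<longleftrightarrow>
     (\<forall>w\<in>set L. w \<noteq> hd L \<longrightarrow> (\<exists>z\<in>set L. E w z \<and> index L z < index L w))"

definition monotone_ftree_parents :: "('a \<Rightarrow> 'a \<Rightarrow> bool) \<Rightarrow> 'a list \<Rightarrow> bool" where
  "monotone_ftree_parents E L \<longleftrightarrow>
     (\<forall>x\<in>set L. \<forall>y\<in>set L. x \<noteq> hd L \<longrightarrow> y \<noteq> hd L \<longrightarrow> index L x < index L y \<longrightarrow>
        index L (ftree_parent E L x) \<le> index L (ftree_parent E L y))"

definition siblings_ordered_by :: "('a \<Rightarrow> 'a \<Rightarrow> bool) \<Rightarrow> 'a list \<Rightarrow> 'a list \<Rightarrow> bool" where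
  "siblings_ordered_by E \<rho> L \<longleftrightarrow>
     (\<forall>x\<in>set L. \<forall>y\<in>set L. x \<noteq> hd L \<longrightarrow> y \<noteq> hd L \<longrightarrow> index L x < index L y \<longrightarrow>
        ftree_parent E L x = ftree_parent E L y \<longrightarrow> index \<rho> x < index \<rho> y)"

lemma connected_ordering_ftree_parent:
  assumes "connected_ordering E L" "w \<in> set L" "w \<noteq> hd L"
  shows "ftree_parent E L w \<in> set L \<and> E w (ftree_parent E L w) \<and>
    index L (ftree_parent E L w) < index L w"
proof -
  obtain z where "z \<in> set L" "E w z" "index L z < index L w"
    using assms unfolding connected_ordering_def by blast
  then show ?thesis
    using ftree_parent_in_set ftree_parent_leftmost by (metis order.strict_trans1)
qed

text \<open>A state of a BFS run: \<open>d\<close> lists the dequeued vertices and \<open>q\<close> the queue,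
  so that \<open>d @ q\<close> is the list of visited vertices.\<close>
definition bfs_invariant :: "('a \<Rightarrow> 'a \<Rightarrow> bool) \<Rightarrow> 'a \<Rightarrow> 'a list \<Rightarrow> 'a list \<Rightarrow> bool" where
  "bfs_invariant E s d q \<longleftrightarrow> distinct (d @ q) \<and> d @ q \<noteq> [] \<and> hd (d @ q) = s \<and>
     (\<forall>v\<in>set d. \<forall>u. E v u \<longrightarrow> u \<in> set (d @ q)) \<and>
     (\<forall>w\<in>set (d @ q). w \<noteq> s \<longrightarrow> (\<exists>z\<in>set d. E w z)) \<and>
     connected_ordering E (d @ q) \<and> monotone_ftree_parents E (d @ q)"

lemma bfs_invariant_start: "bfs_invariant E s [] [s]"
  unfolding bfs_invariant_def connected_ordering_def monotone_ftree_parents_def by simp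

lemma bfs_invariant_hd: "bfs_invariant E s d q \<Longrightarrow> hd (d @ q @ B) = s"
  unfolding bfs_invariant_def by (metis append_assoc hd_append2)

lemma bfs_invariant_ftree_parent_old:
  assumes "bfs_invariant E s d q" "w \<in> set (d @ q)" "w \<noteq> s"
  shows "ftree_parent E (d @ B) w = ftree_parent E d w \<and> ftree_parent E d w \<in> set d"
  using assms ftree_parent_append ftree_parent_in_set unfolding bfs_invariant_def by metis

lemma bfs_invariant_ftree_parent_new:
  assumes "bfs_invariant E s d (v # q)" "\<And>a b. E a b \<Longrightarrow> E b a"
    and "set ns = {u. E v u \<and> u \<notin> set (d @ v # q)}" "w \<in> set ns"
  shows "ftree_parent E (d @ v # B) w = v"
proof -
  have "\<not> E w z" if "z \<in> set d" for z
    using assms that unfolding bfs_invariant_def by blast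
  then have "filter (E w) d = []"
    by (simp add: filter_empty_conv)
  moreover have "E w v"
    using assms by auto
  ultimately show ?thesis
    unfolding ftree_parent_def by simp
qed

lemma bfs_step_connected_ordering:
  assumes inv: "bfs_invariant E s d (v # q)" and sym: "\<And>a b. E a b \<Longrightarrow> E b a"
    and ns: "set ns = {u. E v u \<and> u \<notin> set (d @ v # q)}"
  shows "connected_ordering E (d @ v # q @ ns)"
  unfolding connected_ordering_def
proof (intro ballI impI)
  let ?vis = "d @ v # q" and ?vis' = "d @ v # q @ ns"
  fix w assume w: "w \<in> set ?vis'" "w \<noteq> hd ?vis'"
  show "\<exists>z\<in>set ?vis'. E w z \<and> index ?vis' z < index ?vis' w"
  proof (cases "w \<in> set ?vis")
    case True
    have "connected_ordering E ?vis" "w \<noteq> hd ?vis"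
      using inv w bfs_invariant_hd[OF inv, of ns] bfs_invariant_hd[OF inv, of "[]"]
      unfolding bfs_invariant_def by simp_all
    then obtain z where "z \<in> set ?vis" "E w z" "index ?vis z < index ?vis w"
      using True unfolding connected_ordering_def by blast
    then show ?thesis
      using True index_append_left[of _ ?vis ns] by auto
  next
    case False
    then show ?thesis
      using w ns sym index_append_less[of v ?vis w ns] by auto
  qed
qed

lemma bfs_step_monotone_ftree_parents:
  assumes inv: "bfs_invariant E s d (v # q)" and sym: "\<And>a b. E a b \<Longrightarrow> E b a"
    and ns: "set ns = {u. E v u \<and> u \<notin> set (d @ v # q)}"
  shows "monotone_ftree_parents E (d @ v # q @ ns)"
  unfolding monotone_ftree_parents_def
proof (intro ballI impI)
  let ?vis = "d @ v # q" and ?vis' = "d @ v # q @ ns"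
  have hd: "hd ?vis' = s" "hd ?vis = s"
    using bfs_invariant_hd[OF inv, of ns] bfs_invariant_hd[OF inv, of "[]"] by simp_all
  have old_parent: "ftree_parent E ?vis w = ftree_parent E d w"
      "ftree_parent E ?vis' w = ftree_parent E d w" "ftree_parent E d w \<in> set d"
    if "w \<in> set ?vis" "w \<noteq> s" for w
    using bfs_invariant_ftree_parent_old[OF inv, of w] that by auto
  have new_parent: "ftree_parent E ?vis' w = v" if "w \<in> set ns" for w
    using bfs_invariant_ftree_parent_new[OF inv sym ns that] .
  have old_index: "index ?vis' w = index ?vis w" if "w \<in> set ?vis" for w
    using index_append_left[OF that, of ns] by simp
  have d_before_v: "index ?vis a < index ?vis v" if "a \<in> set d" for a
    using that inv index_append_less[of a d v "v # q"] unfolding bfs_invariant_def by auto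
  have mono: "monotone_ftree_parents E ?vis"
    using inv unfolding bfs_invariant_def by simp
  fix x y
  assume x: "x \<in> set ?vis'" "x \<noteq> hd ?vis'" and y: "y \<in> set ?vis'" "y \<noteq> hd ?vis'"
    and less: "index ?vis' x < index ?vis' y"
  consider "x \<in> set ?vis" "y \<in> set ?vis" | "x \<in> set ?vis" "y \<in> set ns" | "x \<in> set ns"
    using x y by auto
  then show "index ?vis' (ftree_parent E ?vis' x) \<le> index ?vis' (ftree_parent E ?vis' y)"
  proof cases
    case 1
    then have "index ?vis (ftree_parent E d x) \<le> index ?vis (ftree_parent E d y)"
      using mono x y hd less old_index old_parent
      unfolding monotone_ftree_parents_def by (metis (no_types, lifting))
    with 1 show ?thesis
      using x y hd old_parent old_index by simp
  next
    case 2
    then have "index ?vis (ftree_parent E d x) < index ?vis v"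
      using x hd old_parent d_before_v by simp
    with 2 show ?thesis
      using x hd old_parent old_index new_parent by simp
  next
    case 3
    then have "x \<notin> set ?vis"
      using ns by auto
    then have "y \<in> set ns"
      using y less index_append_less[of y ?vis x ns] by fastforce
    with 3 show ?thesis
      using new_parent by simp
  qed
qed

lemma bfs_invariant_step:
  assumes "bfs_invariant E s d (v # q)" "\<And>a b. E a b \<Longrightarrow> E b a"
    and "set ns = {u. E v u \<and> u \<notin> set (d @ v # q)}" "distinct ns"
  shows "bfs_invariant E s (d @ [v]) (q @ ns)"
  using assms bfs_invariant_hd[OF assms(1), of ns]
    bfs_step_connected_ordering[OF assms(1-3)] bfs_step_monotone_ftree_parents[OF assms(1-3)]
  unfolding bfs_invariant_def by auto

lemma bfs_reach_invariant:
  assumes "bfs_reach E s vis q" "\<And>a b. E a b \<Longrightarrow> E b a"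
  shows "\<exists>d. vis = d @ q \<and> bfs_invariant E s d q"
  using assms(1)
proof (induction rule: bfs_reach.induct)
  case start
  show ?case
    using bfs_invariant_start by fastforce
next
  case (step vis v q ns)
  then obtain d where "vis = d @ v # q" "bfs_invariant E s d (v # q)"
    by auto
  then show ?case
    using bfs_invariant_step[of E s d v q ns] step.hyps assms(2) by auto
qed

lemma bfs_ordering_props:
  assumes "bfs_reach E s L []" "connected_graph V E" "s \<in> V"
  shows "linear_ordering V L \<and> hd L = s \<and> connected_ordering E L \<and> monotone_ftree_parents E L"
proof -
  have sym: "\<And>a b. E a b \<Longrightarrow> E b a" and edge: "\<And>a b. E a b \<Longrightarrow> a \<in> V \<and> b \<in> V"
    using assms(2) unfolding connected_graph_def simple_graph_def by blast+
  have inv: "bfs_invariant E s L []"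
    using bfs_reach_invariant[OF assms(1) sym] by auto
  then have hd: "hd L = s" and s: "s \<in> set L"
    unfolding bfs_invariant_def by (auto intro: hd_in_set)
  have "set L \<subseteq> V"
    using inv assms(3) edge unfolding bfs_invariant_def by auto
  moreover have "V \<subseteq> set L"
  proof
    fix u assume "u \<in> V"
    then have "E\<^sup>*\<^sup>* s u"
      using assms(2,3) unfolding connected_graph_def by blast
    then show "u \<in> set L"
      by (induction rule: rtranclp_induct) (use s inv in \<open>auto simp: bfs_invariant_def\<close>)
  qed
  ultimately show ?thesis
    using inv hd unfolding bfs_invariant_def linear_ordering_def by auto
qed

lemma bfsp_reach_bfs_reach:
  assumes "bfsp_reach E \<rho> vis q" "distinct \<rho>" "\<And>a b. E a b \<Longrightarrow> b \<in> set \<rho>"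
  shows "bfs_reach E (hd \<rho>) vis q"
  using assms(1)
proof (induction rule: bfsp_reach.induct)
  case start
  show ?case
    by (rule bfs_reach.start)
next
  case (step vis v q)
  show ?case
    by (rule bfs_reach.step[OF step.IH]) (use assms(2,3) in auto)
qed

lemma bfs_step_siblings_ordered:
  assumes inv: "bfs_invariant E (hd \<rho>) d (v # q)" and sym: "\<And>a b. E a b \<Longrightarrow> E b a"
    and edge: "\<And>a b. E a b \<Longrightarrow> b \<in> set \<rho>"
    and siblings: "siblings_ordered_by E \<rho> (d @ v # q)"
  shows "siblings_ordered_by E \<rho> (d @ v # q @ filter (\<lambda>u. E v u \<and> u \<notin> set (d @ v # q)) \<rho>)"
  unfolding siblings_ordered_by_def
proof (intro ballI impI)
  let ?vis = "d @ v # q" and ?ns = "filter (\<lambda>u. E v u \<and> u \<notin> set (d @ v # q)) \<rho>"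
  let ?vis' = "d @ v # q @ ?ns"
  have ns: "set ?ns = {u. E v u \<and> u \<notin> set ?vis}"
    using edge by auto
  have hd: "hd ?vis' = hd \<rho>" "hd ?vis = hd \<rho>"
    using bfs_invariant_hd[OF inv, of ?ns] bfs_invariant_hd[OF inv, of "[]"] by simp_all
  have old_parent: "ftree_parent E ?vis w = ftree_parent E d w"
      "ftree_parent E ?vis' w = ftree_parent E d w" "ftree_parent E d w \<in> set d"
    if "w \<in> set ?vis" "w \<noteq> hd \<rho>" for w
    using bfs_invariant_ftree_parent_old[OF inv, of w] that by auto
  have new_parent: "ftree_parent E ?vis' w = v" if "w \<in> set ?ns" for w
    using bfs_invariant_ftree_parent_new[OF inv sym ns that] .
  have v: "v \<notin> set d"
    using inv unfolding bfs_invariant_def by simp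
  fix x y
  assume x: "x \<in> set ?vis'" "x \<noteq> hd ?vis'" and y: "y \<in> set ?vis'" "y \<noteq> hd ?vis'"
    and less: "index ?vis' x < index ?vis' y"
    and eq: "ftree_parent E ?vis' x = ftree_parent E ?vis' y"
  consider "x \<in> set ?vis" "y \<in> set ?vis" | "x \<in> set ?vis" "y \<in> set ?ns"
    | "x \<in> set ?ns" "y \<in> set ?vis" | "x \<in> set ?ns" "y \<in> set ?ns"
    using x y by auto
  then show "index \<rho> x < index \<rho> y"
  proof cases
    case 1
    moreover have "index ?vis x < index ?vis y"
      using 1 less index_append_left[of _ ?vis ?ns] by simp
    moreover have "ftree_parent E ?vis x = ftree_parent E ?vis y"
      using 1 x y hd eq old_parent by simp
    moreover have "x \<noteq> hd ?vis" "y \<noteq> hd ?vis"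
      using x y hd by simp_all
    ultimately show ?thesis
      using siblings unfolding siblings_ordered_by_def by blast
  next
    case 2
    then have "ftree_parent E ?vis' x \<in> set d"
      using old_parent x hd by simp
    with 2 show ?thesis
      using eq v new_parent by simp
  next
    case 3
    then have "x \<notin> set ?vis"
      by auto
    then show ?thesis
      using 3 less index_append_less[of y ?vis x ?ns] by simp
  next
    case 4
    then have "index ?ns x < index ?ns y"
      using less index_append_right[of x ?vis ?ns] index_append_right[of y ?vis ?ns] by simp
    then show ?thesis
      by (rule index_filter_less[OF 4])
  qed
qed

lemma bfsp_reach_siblings_ordered:
  assumes "bfsp_reach E \<rho> vis q" "distinct \<rho>" "\<And>a b. E a b \<Longrightarrow> b \<in> set \<rho>"
    and sym: "\<And>a b. E a b \<Longrightarrow> E b a"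
  shows "siblings_ordered_by E \<rho> vis"
  using assms(1)
proof (induction rule: bfsp_reach.induct)
  case start
  show ?case
    unfolding siblings_ordered_by_def by simp
next
  case (step vis v q)
  have "bfs_reach E (hd \<rho>) vis (v # q)"
    using step.hyps assms(2,3) by (rule bfsp_reach_bfs_reach)
  then have "\<exists>d. vis = d @ v # q \<and> bfs_invariant E (hd \<rho>) d (v # q)"
    using sym by (rule bfs_reach_invariant)
  then obtain d where "vis = d @ v # q" "bfs_invariant E (hd \<rho>) d (v # q)"
    by blast
  then show ?case
    using bfs_step_siblings_ordered[of E \<rho> d v q] step.IH sym assms(3) by simp
qed

lemma bfs_plus_ordering_props:
  assumes "bfs_plus_ordering E \<rho> \<tau>" "connected_graph V E" "linear_ordering V \<rho>" "hd \<rho> \<in> V"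
  shows "linear_ordering V \<tau> \<and> hd \<tau> = hd \<rho> \<and> monotone_ftree_parents E \<tau> \<and>
    siblings_ordered_by E \<rho> \<tau>"
proof -
  have graph: "simple_graph V E"
    using assms(2) unfolding connected_graph_def by simp
  then have sym: "\<And>a b. E a b \<Longrightarrow> E b a"
    unfolding simple_graph_def by blast
  have edge: "\<And>a b. E a b \<Longrightarrow> b \<in> set \<rho>"
    using graph assms(3) unfolding simple_graph_def linear_ordering_def by blast
  have distinct: "distinct \<rho>"
    using assms(3) unfolding linear_ordering_def by simp
  have bfsp: "bfsp_reach E \<rho> \<tau> []"
    using assms(1) unfolding bfs_plus_ordering_def .
  have "siblings_ordered_by E \<rho> \<tau>"
    using bfsp distinct edge sym by (rule bfsp_reach_siblings_ordered)
  moreover have "bfs_reach E (hd \<rho>) \<tau> []"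
    using bfsp distinct edge by (rule bfsp_reach_bfs_reach)
  ultimately show ?thesis
    using bfs_ordering_props[OF _ assms(2,4)] by simp
qed

definition before :: "'a list \<Rightarrow> 'a \<Rightarrow> 'a set" where
  "before L u = {y. index L y < index L u}"

lemma ftree_parent_eq_if_before_subset:
  assumes "set \<tau> = set \<sigma>" "z \<in> set \<sigma>" "E w z"
    and "before \<tau> (ftree_parent E \<sigma> w) \<subseteq> before \<sigma> (ftree_parent E \<sigma> w)"
  shows "ftree_parent E \<tau> w = ftree_parent E \<sigma> w"
proof (rule ccontr)
  let ?a = "ftree_parent E \<sigma> w" and ?b = "ftree_parent E \<tau> w"
  assume ne: "?b \<noteq> ?a"
  have a: "?a \<in> set \<tau>" "E w ?a"
    using ftree_parent_in_set assms(1-3) by metis+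
  have b: "?b \<in> set \<sigma>" "E w ?b"
    using ftree_parent_in_set assms(1-3) by metis+
  have "index \<tau> ?b \<le> index \<tau> ?a"
    using ftree_parent_leftmost a by metis
  with ne have "index \<tau> ?b < index \<tau> ?a"
    using a b assms(1) index_eq_iff by (metis order_le_less)
  then have "index \<sigma> ?b < index \<sigma> ?a"
    using assms(4) unfolding before_def by blast
  moreover have "index \<sigma> ?a \<le> index \<sigma> ?b"
    using ftree_parent_leftmost b by metis
  ultimately show False
    by simp
qed

lemma hd_in_before: "u \<in> set L \<Longrightarrow> u \<noteq> hd L \<Longrightarrow> hd L \<in> before L u"
  unfolding before_def by (cases L) auto

lemma monotone_ftree_parents_strict:
  assumes "monotone_ftree_parents E L" "x \<in> set L" "y \<in> set L" "x \<noteq> hd L" "y \<noteq> hd L"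
    and "index L (ftree_parent E L x) < index L (ftree_parent E L y)"
  shows "index L x < index L y"
proof -
  have "x \<noteq> y"
    using assms(6) by auto
  moreover have "\<not> index L y < index L x"
    using assms unfolding monotone_ftree_parents_def by fastforce
  ultimately show ?thesis
    using index_eq_iff assms(2,3) by (metis linorder_neqE_nat)
qed

lemma before_subset_child:
  assumes set: "set \<tau> = set \<sigma>" and hd: "hd \<tau> = hd \<sigma>" and conn: "connected_ordering E \<sigma>"
    and mono_\<sigma>: "monotone_ftree_parents E \<sigma>" and mono_\<tau>: "monotone_ftree_parents E \<tau>"
    and siblings: "siblings_ordered_by E \<rho> \<tau>"
    and u: "u \<in> set \<sigma>" "u \<noteq> hd \<sigma>"
    and parent: "before \<tau> (ftree_parent E \<sigma> u) \<subseteq> before \<sigma> (ftree_parent E \<sigma> u)"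
    and \<rho>: "before \<rho> u \<subseteq> before \<sigma> u"
  shows "before \<tau> u \<subseteq> before \<sigma> u"
proof
  let ?p = "ftree_parent E \<sigma> u"
  have p: "?p \<in> set \<sigma>" "E u ?p"
    using connected_ordering_ftree_parent[OF conn u] by auto
  have \<tau>_parent_u: "ftree_parent E \<tau> u = ?p"
    using ftree_parent_eq_if_before_subset[OF set p parent] .
  fix y assume "y \<in> before \<tau> u"
  then have y_less: "index \<tau> y < index \<tau> u"
    unfolding before_def by simp
  then have y: "y \<in> set \<sigma>"
    using u set index_less_length_iff[of \<tau>] by (metis order.strict_trans)
  show "y \<in> before \<sigma> u"
  proof (cases "y = hd \<sigma>")
    case True
    then show ?thesis
      using hd_in_before u by simp
  next
    case y_root: False
    let ?q = "ftree_parent E \<tau> y"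
    have q: "?q \<in> set \<sigma>" "E y ?q"
      using connected_ordering_ftree_parent[OF conn y y_root] ftree_parent_in_set set by metis+
    have "index \<tau> ?q \<le> index \<tau> ?p"
      using mono_\<tau> y u y_root y_less \<tau>_parent_u set hd
      unfolding monotone_ftree_parents_def by metis
    show ?thesis
    proof (cases "?q = ?p")
      case True
      then have "index \<rho> y < index \<rho> u"
        using siblings y u y_root y_less \<tau>_parent_u set hd
        unfolding siblings_ordered_by_def by metis
      then show ?thesis
        using \<rho> unfolding before_def by blast
    next
      case False
      with \<open>index \<tau> ?q \<le> index \<tau> ?p\<close> have "index \<tau> ?q < index \<tau> ?p"
        using q p set index_eq_iff by (metis order_le_less)
      then have "index \<sigma> ?q < index \<sigma> ?p"
        using parent unfolding before_def by blast
      moreover have "index \<sigma> (ftree_parent E \<sigma> y) \<le> index \<sigma> ?q"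
        using ftree_parent_leftmost q by metis
      ultimately have "index \<sigma> y < index \<sigma> u"
        using monotone_ftree_parents_strict[OF mono_\<sigma> y u(1) y_root u(2)] by simp
      then show ?thesis
        unfolding before_def by simp
    qed
  qed
qed

lemma before_prefix_take_filter:
  assumes "prefix (take k (filter P \<sigma>)) \<rho>" "u \<in> set (take k (filter P \<sigma>))"
  shows "before \<rho> u \<subseteq> before \<sigma> u"
proof
  let ?S = "take k (filter P \<sigma>)"
  obtain R where \<rho>: "\<rho> = ?S @ R"
    using assms(1) by (auto elim: prefixE)
  fix y assume "y \<in> before \<rho> u"
  then have less: "index \<rho> y < index \<rho> u"
    unfolding before_def by simp
  also have "index \<rho> u = index ?S u"
    using \<rho> assms(2) index_append_left by metis
  finally have "index \<rho> y < index ?S u" .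
  then have y: "y \<in> set ?S"
  proof (rule contrapos_pp)
    assume "y \<notin> set ?S"
    then show "\<not> index \<rho> y < index ?S u"
      using \<rho> index_append_right[of y ?S R] index_less_length[OF assms(2)] by (simp add: min_def)
  qed
  then have "index ?S y < index ?S u"
    using less \<rho> assms(2) index_append_left[of _ ?S R] by simp
  then have "index (filter P \<sigma>) y < index (filter P \<sigma>) u"
    using index_take[OF y] index_take[OF assms(2)] by simp
  then show "y \<in> before \<sigma> u"
    using index_filter_less[OF in_set_takeD[OF y] in_set_takeD[OF assms(2)]]
    unfolding before_def by simp
qed

lemma ftree_internal_parent:
  "w \<in> set \<sigma> \<Longrightarrow> w \<noteq> hd \<sigma> \<Longrightarrow> ftree_parent E \<sigma> w \<in> set \<sigma> \<Longrightarrow>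
   ftree_internal E \<sigma> (ftree_parent E \<sigma> w)"
  unfolding ftree_internal_def ftree_children_def by blast

lemma first_internal_downward_closed:
  "u \<in> set (first_internal E \<sigma> k) \<Longrightarrow> ftree_internal E \<sigma> a \<Longrightarrow> index \<sigma> a \<le> index \<sigma> u \<Longrightarrow>
   a \<in> set (first_internal E \<sigma> k)"
  unfolding first_internal_def using take_filter_downward_closed ftree_internal_def by metis

lemma hd_first_internal:
  assumes "first_internal E \<sigma> k \<noteq> []"
  shows "hd (first_internal E \<sigma> k) = hd \<sigma>"
proof (cases \<sigma>)
  case (Cons s \<sigma>')
  then have "ftree_internal E \<sigma> s"
    unfolding ftree_internal_def by simp
  with Cons assms show ?thesis
    unfolding first_internal_def by (cases k) auto
qed (use assms in \<open>simp add: first_internal_def\<close>)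

lemma first_internal_before_subset:
  assumes "set \<tau> = set \<sigma>" "hd \<tau> = hd \<sigma>" "connected_ordering E \<sigma>"
    and "monotone_ftree_parents E \<sigma>" "monotone_ftree_parents E \<tau>" "siblings_ordered_by E \<rho> \<tau>"
    and \<rho>: "prefix (first_internal E \<sigma> k) \<rho>"
  shows "u \<in> set (first_internal E \<sigma> k) \<Longrightarrow> before \<tau> u \<subseteq> before \<sigma> u"
proof (induction "index \<sigma> u" arbitrary: u rule: less_induct)
  case less
  then have u: "u \<in> set \<sigma>"
    unfolding first_internal_def by (auto dest: in_set_takeD)
  show ?case
  proof (cases "u = hd \<sigma>")
    case True
    have "\<tau> \<noteq> []"
      using u assms(1) by auto
    then have "index \<tau> u = 0"
      using True assms(2) index_hd by metis
    then show ?thesis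
      unfolding before_def by simp
  next
    case False
    let ?p = "ftree_parent E \<sigma> u"
    have p: "?p \<in> set \<sigma>" "index \<sigma> ?p < index \<sigma> u"
      using connected_ordering_ftree_parent[OF assms(3) u False] by auto
    then have "?p \<in> set (first_internal E \<sigma> k)"
      using first_internal_downward_closed[OF less.prems ftree_internal_parent[OF u False p(1)]]
      by simp
    then have "before \<tau> ?p \<subseteq> before \<sigma> ?p"
      using less.hyps p(2) by blast
    moreover have "before \<rho> u \<subseteq> before \<sigma> u"
      using \<rho> less.prems unfolding first_internal_def by (rule before_prefix_take_filter)
    ultimately show ?thesis
      by (rule before_subset_child[OF assms(1-6) u False])
  qed
qed

lemma ftree_children_eq_if_before_subset:
  assumes set: "set \<tau> = set \<sigma>" and hd: "hd \<tau> = hd \<sigma>" and conn: "connected_ordering E \<sigma>"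
    and before: "\<And>a. ftree_internal E \<sigma> a \<Longrightarrow> index \<sigma> a \<le> index \<sigma> v \<Longrightarrow>
      before \<tau> a \<subseteq> before \<sigma> a"
  shows "ftree_children E \<sigma> v = ftree_children E \<tau> v"
proof -
  have "ftree_parent E \<sigma> w = v \<longleftrightarrow> ftree_parent E \<tau> w = v" if w: "w \<in> set \<sigma>" "w \<noteq> hd \<sigma>" for w
  proof -
    let ?a = "ftree_parent E \<sigma> w"
    have a: "?a \<in> set \<sigma>" "E w ?a"
      using connected_ordering_ftree_parent[OF conn w] by auto
    have internal: "ftree_internal E \<sigma> ?a"
      using ftree_internal_parent w a(1) .
    show ?thesis
    proof
      assume "?a = v"
      then have "before \<tau> ?a \<subseteq> before \<sigma> ?a"
        using before[OF internal] by simp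
      then show "ftree_parent E \<tau> w = v"
        using ftree_parent_eq_if_before_subset[of \<tau> \<sigma> ?a E w, OF set a] \<open>?a = v\<close> by simp
    next
      assume \<tau>_parent: "ftree_parent E \<tau> w = v"
      then have "v \<in> set \<sigma>" "E w v"
        using ftree_parent_in_set[of ?a \<tau> E w] a set by auto
      then have "index \<sigma> ?a \<le> index \<sigma> v"
        by (rule ftree_parent_leftmost)
      then have "ftree_parent E \<tau> w = ?a"
        using ftree_parent_eq_if_before_subset[of \<tau> \<sigma> ?a E w, OF set a] before[OF internal] by simp
      with \<tau>_parent show "?a = v"
        by simp
    qed
  qed
  then show ?thesis
    unfolding ftree_children_def using set hd by auto
qed

theorem lemma4p6:
  fixes V :: "'a set" and E :: "'a \<Rightarrow> 'a \<Rightarrow> bool"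
    and \<sigma> \<rho> \<tau> :: "'a list" and k :: nat
  assumes "connected_graph V E"
    and "bfs_ordering V E \<sigma>"
    and "linear_ordering V \<rho>"
    and "prefix (first_internal E \<sigma> k) \<rho>"
    and "bfs_plus_ordering E \<rho> \<tau>"
  shows "\<forall>v \<in> set (first_internal E \<sigma> k). ftree_children E \<sigma> v = ftree_children E \<tau> v"
proof (cases "first_internal E \<sigma> k = []")
  case False
  obtain s where s: "s \<in> V" "bfs_reach E s \<sigma> []"
    using assms(2) unfolding bfs_ordering_def by blast
  have \<sigma>: "linear_ordering V \<sigma>" "hd \<sigma> = s" "connected_ordering E \<sigma>" "monotone_ftree_parents E \<sigma>"
    using bfs_ordering_props[OF s(2) assms(1) s(1)] by auto
  obtain R where "\<rho> = first_internal E \<sigma> k @ R"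
    using assms(4) by (auto elim: prefixE)
  then have hd_\<rho>: "hd \<rho> = s"
    using hd_first_internal[OF False] False \<sigma>(2) by simp
  have \<tau>: "linear_ordering V \<tau>" "hd \<tau> = s" "monotone_ftree_parents E \<tau>"
      "siblings_ordered_by E \<rho> \<tau>"
    using bfs_plus_ordering_props[OF assms(5,1,3)] hd_\<rho> s(1) by simp_all
  have set: "set \<tau> = set \<sigma>" and hd: "hd \<tau> = hd \<sigma>"
    using \<sigma>(1,2) \<tau>(1,2) unfolding linear_ordering_def by simp_all
  show ?thesis
  proof
    fix v assume v: "v \<in> set (first_internal E \<sigma> k)"
    have "before \<tau> a \<subseteq> before \<sigma> a"
      if "ftree_internal E \<sigma> a" "index \<sigma> a \<le> index \<sigma> v" for a
      using first_internal_before_subset[OF set hd \<sigma>(3,4) \<tau>(3,4) assms(4)]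
        first_internal_downward_closed[OF v that] .
    then show "ftree_children E \<sigma> v = ftree_children E \<tau> v"
      by (rule ftree_children_eq_if_before_subset[OF set hd \<sigma>(3)])
  qed
qed simp

end
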